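(* Let $\mathcal{S}$ be an accessible subgroup of $\mathrm{GL}(d,\mathbb{R})$. Then there exists $K>0$ such that for all $u,v\in\mathbb{R}P^{d-1}$ there is $R_{u,v}\in\mathcal{S}$ with $\|R_{u,v}^{\pm1}\|\le K$ and $R_{u,v}u=v$.
   Context: A subgroup $\mathcal{S}\subseteq\mathrm{GL}(d,\mathbb{R})$ is accessible if it is a non-empty closed subgroup acting transitively on the projective space $\mathbb{R}P^{d-1}$, i.e. for all $u,v\in\mathbb{R}P^{d-1}$ there is $R\in\mathcal{S}$ with $Ru=v$. $\|\cdot\|$ is an operator norm. *)

theory Defs
  imports "HOL-Analysis.Analysis"
begin

text \<open>GL(d,R) realised as the invertible d x d real matrices, d = CARD('n).\<close>
definition GL :: "(real^'n^'n) set" where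
  "GL = {A. invertible A}"

definition is_GL_subgroup :: "(real^'n^'n) set \<Rightarrow> bool" where
  "is_GL_subgroup S \<longleftrightarrow> S \<subseteq> GL \<and> mat 1 \<in> S \<and>
     (\<forall>A\<in>S. \<forall>B\<in>S. A ** B \<in> S) \<and> (\<forall>A\<in>S. matrix_inv A \<in> S)"

text \<open>Equality of the points of RP^(d-1) represented by nonzero vectors x, y.\<close>
definition proj_eq :: "real^'n \<Rightarrow> real^'n \<Rightarrow> bool" where
  "proj_eq x y \<longleftrightarrow> (\<exists>c. c \<noteq> 0 \<and> x = c *\<^sub>R y)"

definition accessible :: "(real^'n^'n) set \<Rightarrow> bool" where
  "accessible S \<longleftrightarrow> S \<noteq> {} \<and> is_GL_subgroup S \<and> closedin (top_of_set GL) S \<and>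
     (\<forall>u v. u \<noteq> 0 \<longrightarrow> v \<noteq> 0 \<longrightarrow> (\<exists>R\<in>S. proj_eq (R *v u) v))"

end

theory Submission
  imports Defs
begin

text \<open>
  Fix a nonzero vector \<open>u\<^sub>0\<close>. The directions reached from \<open>u\<^sub>0\<close> by elements \<open>R \<in> S\<close> with
  \<open>\<parallel>R\<parallel>, \<parallel>R\<^sup>-\<^sup>1\<parallel> \<le> k\<close> form, together with 0, a closed cone: it is spanned by the image of a
  compact set, because \<open>S\<close> is closed in GL. By transitivity these cones cover the whole space,
  so by Baire one of them has interior. Moving that interior around by elements of \<open>S\<close> puts
  every nonzero vector in the interior of some such cone, and compactness of the unit sphere
  gives one bound \<open>C\<close> for all directions. Finally \<open>R\<^sub>u\<^sub>,\<^sub>v = Q T\<^sup>-\<^sup>1\<close>, where \<open>T\<close> and \<open>Q\<close> move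
  \<open>u\<^sub>0\<close> to \<open>u\<close> and \<open>v\<close>, has both norms bounded by \<open>C\<^sup>2\<close>.
\<close>

lemma interior_insert_nonempty:
  fixes a :: "'a::{t1_space, perfect_space}"
  assumes "interior (insert a A) \<noteq> {}"
  shows "interior A \<noteq> {}"
proof -
  have "open (interior (insert a A) - {a})"
    by (simp add: open_Diff)
  moreover have "interior (insert a A) - {a} \<noteq> {}"
    using assms not_open_singleton[of a] by (metis Diff_eq_empty_iff open_interior subset_singleton_iff)
  moreover have "interior (insert a A) - {a} \<subseteq> A"
    using interior_subset by blast
  ultimately show ?thesis
    by (metis interior_maximal subset_empty)
qed

lemma closed_cover_interior_nonempty:
  fixes F :: "nat \<Rightarrow> 'a::complete_space set"
  assumes "\<And>k. closed (F k)" "(\<Union>k. F k) = UNIV"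
  shows "\<exists>k. interior (F k) \<noteq> {}"
proof (rule ccontr)
  assume "\<nexists>k. interior (F k) \<noteq> {}"
  then have "euclidean interior_of \<Union>(range F) = {}"
    using assms(1) completely_metrizable_space_euclidean
    by (intro Baire_category_alt) auto
  then show False
    using assms(2) by simp
qed

lemma compact_subset_of_mono_family:
  fixes A :: "real \<Rightarrow> 'a::topological_space set"
  assumes "compact C" "mono A" "\<And>x. x \<in> C \<Longrightarrow> \<exists>K. x \<in> interior (A K)"
  shows "\<exists>K. C \<subseteq> A K"
proof -
  obtain Kx where Kx: "\<And>x. x \<in> C \<Longrightarrow> x \<in> interior (A (Kx x))"
    using assms(3) by metis
  obtain D where "D \<subseteq> C" "finite D" "C \<subseteq> (\<Union>x\<in>D. interior (A (Kx x)))"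
    using compactE_image[OF assms(1), of C "\<lambda>x. interior (A (Kx x))"] Kx by blast
  define K where "K = Max (insert 0 (Kx ` D))"
  have "interior (A (Kx x)) \<subseteq> A K" if "x \<in> D" for x
  proof -
    have "Kx x \<le> K"
      unfolding K_def using \<open>finite D\<close> that by simp
    then show ?thesis
      using interior_subset monoD[OF assms(2)] by blast
  qed
  then show ?thesis
    using \<open>C \<subseteq> (\<Union>x\<in>D. interior (A (Kx x)))\<close> by blast
qed

lemma matrix_inv_right:
  fixes R :: "'a::semiring_1^'n^'m"
  assumes "invertible R"
  shows "R ** matrix_inv R = mat 1"
  using someI_ex[OF assms[unfolded invertible_def]] unfolding matrix_inv_def by blast

lemma matrix_inv_left:
  fixes R :: "'a::semiring_1^'n^'m"
  assumes "invertible R"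
  shows "matrix_inv R ** R = mat 1"
  using someI_ex[OF assms[unfolded invertible_def]] unfolding matrix_inv_def by blast

lemma matrix_inv_unique:
  fixes R Q :: "'a::field^'n^'n"
  assumes "R ** Q = mat 1"
  shows "matrix_inv R = Q"
proof -
  have "invertible R"
    using assms invertible_right_inverse by blast
  then have "matrix_inv R = (matrix_inv R ** R) ** Q"
    by (metis assms matrix_mul_assoc matrix_mul_rid)
  then show ?thesis
    using matrix_inv_left[OF \<open>invertible R\<close>] by (simp add: matrix_mul_lid)
qed

lemma matrix_inv_matrix_inv:
  fixes R :: "'a::field^'n^'n"
  assumes "invertible R"
  shows "matrix_inv (matrix_inv R) = R"
  using matrix_inv_left[OF assms] by (rule matrix_inv_unique)

lemma matrix_inv_mult:
  fixes A B :: "'a::field^'n^'n"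
  assumes "invertible A" "invertible B"
  shows "matrix_inv (A ** B) = matrix_inv B ** matrix_inv A"
proof (rule matrix_inv_unique)
  have "(A ** B) ** (matrix_inv B ** matrix_inv A) = A ** (B ** matrix_inv B) ** matrix_inv A"
    by (simp add: matrix_mul_assoc)
  then show "(A ** B) ** (matrix_inv B ** matrix_inv A) = mat 1"
    by (simp add: matrix_inv_right assms)
qed

lemma matrix_inv_cancel_left:
  fixes R :: "'a::field^'n^'n"
  assumes "invertible R"
  shows "matrix_inv R *v (R *v x) = x"
  by (simp add: matrix_vector_mul_assoc matrix_inv_left[OF assms])

lemma matrix_inv_cancel_right:
  fixes R :: "'a::field^'n^'n"
  assumes "invertible R"
  shows "R *v (matrix_inv R *v x) = x"
  by (simp add: matrix_vector_mul_assoc matrix_inv_right[OF assms])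

lemma onorm_matrix_mult_le:
  fixes A :: "real^'m^'n" and B :: "real^'k^'m"
  shows "onorm ((*v) (A ** B)) \<le> onorm ((*v) A) * onorm ((*v) B)"
proof -
  have "(*v) (A ** B) = (*v) A \<circ> (*v) B"
    by (auto simp: matrix_vector_mul_assoc)
  then show ?thesis
    using onorm_compose[OF matrix_vector_mul_bounded_linear matrix_vector_mul_bounded_linear] by simp
qed

definition bounded_with_inverse :: "real \<Rightarrow> real^'n^'n \<Rightarrow> bool" where
  "bounded_with_inverse K R \<longleftrightarrow> onorm ((*v) R) \<le> K \<and> onorm ((*v) (matrix_inv R)) \<le> K"

lemma bounded_with_inverse_mono: "bounded_with_inverse K R \<Longrightarrow> K \<le> K' \<Longrightarrow> bounded_with_inverse K' R"
  unfolding bounded_with_inverse_def by auto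

lemma bounded_with_inverse_exists: "\<exists>K. bounded_with_inverse K R"
  unfolding bounded_with_inverse_def by (meson max.cobounded1 max.cobounded2)

lemma bounded_with_inverse_matrix_inv:
  assumes "invertible R" "bounded_with_inverse K R"
  shows "bounded_with_inverse K (matrix_inv R)"
  using assms by (simp add: bounded_with_inverse_def matrix_inv_matrix_inv)

lemma bounded_with_inverse_mult:
  assumes "invertible A" "invertible B"
    and "bounded_with_inverse K A" "bounded_with_inverse L B"
  shows "bounded_with_inverse (K * L) (A ** B)"
proof -
  have "onorm ((*v) (A ** B)) \<le> K * L"
    using onorm_matrix_mult_le[of A B] assms(3,4) unfolding bounded_with_inverse_def
    by (meson mult_mono onorm_pos_le[OF matrix_vector_mul_bounded_linear] order_trans)
  moreover have "onorm ((*v) (matrix_inv B ** matrix_inv A)) \<le> L * K"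
    using onorm_matrix_mult_le[of "matrix_inv B" "matrix_inv A"] assms(3,4)
    unfolding bounded_with_inverse_def
    by (meson mult_mono onorm_pos_le[OF matrix_vector_mul_bounded_linear] order_trans)
  ultimately show ?thesis
    unfolding bounded_with_inverse_def matrix_inv_mult[OF assms(1,2)] by (simp add: mult.commute)
qed

lemma onorm_matrix_le_iff:
  fixes A :: "real^'n^'m"
  shows "onorm ((*v) A) \<le> K \<longleftrightarrow> (\<forall>x. norm (A *v x) \<le> K * norm x)"
proof
  assume "onorm ((*v) A) \<le> K"
  then show "\<forall>x. norm (A *v x) \<le> K * norm x"
    by (meson onorm[OF matrix_vector_mul_bounded_linear] mult_right_mono norm_ge_zero order_trans)
qed (intro onorm_le, auto)

lemma closed_onorm_matrix_le: "closed {A::real^'n^'m. onorm ((*v) A) \<le> K}"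
proof -
  have "continuous_on UNIV (\<lambda>A::real^'n^'m. norm (A *v x))" for x
    unfolding matrix_vector_mult_def by (intro continuous_intros)
  then have "closed {A::real^'n^'m. norm (A *v x) \<le> K * norm x}" for x
    using closed_Collect_le[OF _ continuous_on_const] by blast
  then show ?thesis
    unfolding onorm_matrix_le_iff by (intro closed_Collect_all)
qed

lemma bounded_matrix_entries: "bounded {A::real^'n^'m. \<forall>i j. \<bar>A$i$j\<bar> \<le> K}"
proof -
  have "norm A \<le> real CARD('m) * (real CARD('n) * K)" if "\<forall>i j. \<bar>A$i$j\<bar> \<le> K" for A :: "real^'n^'m"
  proof -
    have "norm (A$i) \<le> real CARD('n) * K" for i
      using norm_le_l1_cart[of "A$i"] sum_mono[of UNIV "\<lambda>j. \<bar>A$i$j\<bar>" "\<lambda>_. K"] that by simp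
    then have "(\<Sum>i\<in>UNIV. norm (A$i)) \<le> real CARD('m) * (real CARD('n) * K)"
      using sum_mono[of UNIV "\<lambda>i. norm (A$i)" "\<lambda>_. real CARD('n) * K"] by simp
    moreover have "norm A \<le> (\<Sum>i\<in>UNIV. norm (A$i))"
      unfolding norm_vec_def by (rule L2_set_le_sum) auto
    ultimately show ?thesis
      by linarith
  qed
  then show ?thesis
    unfolding bounded_iff by blast
qed

lemma compact_onorm_matrix_le: "compact {A::real^'n^'m. onorm ((*v) A) \<le> K}"
proof -
  have "{A::real^'n^'m. onorm ((*v) A) \<le> K} \<subseteq> {A. \<forall>i j. \<bar>A$i$j\<bar> \<le> K}"
    using matrix_component_le_onorm order_trans by blast
  then have "bounded {A::real^'n^'m. onorm ((*v) A) \<le> K}"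
    by (rule bounded_subset[OF bounded_matrix_entries])
  then show ?thesis
    using closed_onorm_matrix_le compact_eq_bounded_closed by blast
qed

lemma compact_invertible_bounded_with_inverse:
  "compact {R::real^'n^'n. invertible R \<and> bounded_with_inverse K R}"
proof -
  define M where "M = {A::real^'n^'n. onorm ((*v) A) \<le> K}"
  define P where "P = (M \<times> M) \<inter> {p. fst p ** snd p = mat 1}"
  have "continuous_on UNIV (\<lambda>p::(real^'n^'n) \<times> (real^'n^'n). fst p ** snd p)"
    unfolding matrix_matrix_mult_def by (intro continuous_intros)
  then have "closed {p::(real^'n^'n) \<times> (real^'n^'n). fst p ** snd p = mat 1}"
    using closed_Collect_eq[OF _ continuous_on_const] by blast
  then have "compact P"
    unfolding P_def M_def by (intro compact_Int_closed compact_Times compact_onorm_matrix_le)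
  moreover have "{R. invertible R \<and> bounded_with_inverse K R} = fst ` P"
  proof
    show "{R. invertible R \<and> bounded_with_inverse K R} \<subseteq> fst ` P"
    proof clarify
      fix R :: "real^'n^'n"
      assume "invertible R" "bounded_with_inverse K R"
      then have "(R, matrix_inv R) \<in> P"
        unfolding P_def M_def bounded_with_inverse_def by (simp add: matrix_inv_right)
      then show "R \<in> fst ` P"
        by force
    qed
    show "fst ` P \<subseteq> {R. invertible R \<and> bounded_with_inverse K R}"
    proof
      fix R :: "real^'n^'n"
      assume "R \<in> fst ` P"
      then obtain Q where "(R, Q) \<in> P"
        by force
      then have "R ** Q = mat 1" "R \<in> M" "Q \<in> M"
        unfolding P_def by auto
      moreover from \<open>R ** Q = mat 1\<close> have "invertible R" "matrix_inv R = Q"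
        using invertible_right_inverse matrix_inv_unique by blast+
      ultimately show "R \<in> {R. invertible R \<and> bounded_with_inverse K R}"
        unfolding M_def bounded_with_inverse_def by simp
    qed
  qed
  ultimately show ?thesis
    by (simp add: compact_continuous_image continuous_on_fst)
qed

lemma compact_bounded_with_inverse_in:
  assumes "closedin (top_of_set GL) S"
  shows "compact {R\<in>S. bounded_with_inverse K R}"
proof -
  obtain C where "closed C" "S = GL \<inter> C"
    using assms closedin_closed by blast
  then have "{R\<in>S. bounded_with_inverse K R} = C \<inter> {R. invertible R \<and> bounded_with_inverse K R}"
    by (auto simp: GL_def)
  then show ?thesis
    using \<open>closed C\<close> by (simp add: closed_Int_compact compact_invertible_bounded_with_inverse)
qed

lemma proj_eq_iff_scaleR: "proj_eq x y \<longleftrightarrow> (\<exists>c. c \<noteq> 0 \<and> y = c *\<^sub>R x)"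
proof -
  have "x = c *\<^sub>R y \<longleftrightarrow> y = inverse c *\<^sub>R x" if "c \<noteq> 0" for c
    using that by auto
  then show ?thesis
    unfolding proj_eq_def by (metis inverse_inverse_eq inverse_nonzero_iff_nonzero)
qed

lemma proj_eq_sym: "proj_eq x y \<Longrightarrow> proj_eq y x"
  using proj_eq_iff_scaleR proj_eq_def by metis

lemma proj_eq_trans: "proj_eq x y \<Longrightarrow> proj_eq y z \<Longrightarrow> proj_eq x z"
  unfolding proj_eq_def by (metis mult_eq_0_iff scaleR_scaleR)

lemma proj_eq_scaleR: "c \<noteq> 0 \<Longrightarrow> proj_eq (c *\<^sub>R x) x"
  unfolding proj_eq_def by blast

lemma proj_eq_matrix_vector_mult: "proj_eq x y \<Longrightarrow> proj_eq (A *v x) (A *v y)"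
  unfolding proj_eq_def by (metis matrix_vector_mult_scaleR)

definition proj_saturation :: "(real^'n) set \<Rightarrow> (real^'n) set" where
  "proj_saturation P = {x. \<exists>p\<in>P. proj_eq p x}"

lemma proj_saturation_proj_eq: "x \<in> proj_saturation P \<Longrightarrow> proj_eq x y \<Longrightarrow> y \<in> proj_saturation P"
  unfolding proj_saturation_def using proj_eq_trans by blast

lemma open_proj_saturation:
  assumes "open W"
  shows "open (proj_saturation W)"
proof -
  have "proj_saturation W = (\<Union>c\<in>-{0}. (\<lambda>x. c *\<^sub>R x) ` W)"
    unfolding proj_saturation_def proj_eq_iff_scaleR by blast
  then show ?thesis
    using assms by (simp add: open_UN open_scaling)
qed

lemma insert_zero_proj_saturation:
  assumes "P \<noteq> {}"
  shows "insert 0 (proj_saturation P) = {c *\<^sub>R p | c p. p \<in> P}"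
  using assms unfolding proj_saturation_def proj_eq_iff_scaleR by auto blast+

lemma scaleR_multiples_eq_conic_hull:
  fixes P :: "'a::real_vector set"
  shows "{c *\<^sub>R p | c p. p \<in> P} = conic hull (P \<union> uminus ` P)"
proof -
  have "c *\<^sub>R p \<in> conic hull (P \<union> uminus ` P)" if "p \<in> P" for c p
  proof (cases "0 \<le> c")
    case False
    then have "c *\<^sub>R p = (- c) *\<^sub>R (- p)" "0 \<le> - c"
      by simp_all
    then show ?thesis
      using that unfolding conic_hull_explicit by blast
  qed (use that in \<open>auto simp: conic_hull_explicit\<close>)
  moreover have "c *\<^sub>R y \<in> {c *\<^sub>R p | c p. p \<in> P}" if "y \<in> P \<union> uminus ` P" for c y
    using that by auto (metis scaleR_minus_left)
  ultimately show ?thesis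
    unfolding conic_hull_explicit by blast
qed

lemma closed_insert_zero_proj_saturation:
  assumes "compact P" "0 \<notin> P"
  shows "closed (insert 0 (proj_saturation P))"
proof (cases "P = {}")
  case True
  then show ?thesis
    by (simp add: proj_saturation_def)
next
  case False
  have "compact (P \<union> uminus ` P)"
    using assms(1) by (simp add: compact_Un compact_negations)
  moreover have "0 \<notin> P \<union> uminus ` P"
    using assms(2) by (auto simp: image_iff)
  ultimately show ?thesis
    using closed_conic_hull
    unfolding insert_zero_proj_saturation[OF False] scaleR_multiples_eq_conic_hull by blast
qed

definition bounded_orbit :: "(real^'n^'n) set \<Rightarrow> real \<Rightarrow> real^'n \<Rightarrow> (real^'n) set" where
  "bounded_orbit S K u = proj_saturation ((\<lambda>R. R *v u) ` {R\<in>S. bounded_with_inverse K R})"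

lemma mem_bounded_orbit:
  "x \<in> bounded_orbit S K u \<longleftrightarrow> (\<exists>R\<in>S. bounded_with_inverse K R \<and> proj_eq (R *v u) x)"
  unfolding bounded_orbit_def proj_saturation_def by blast

lemma bounded_orbit_proj_eq: "x \<in> bounded_orbit S K u \<Longrightarrow> proj_eq x y \<Longrightarrow> y \<in> bounded_orbit S K u"
  unfolding bounded_orbit_def by (rule proj_saturation_proj_eq)

lemma bounded_orbit_mono: "K \<le> L \<Longrightarrow> bounded_orbit S K u \<subseteq> bounded_orbit S L u"
  unfolding subset_iff mem_bounded_orbit by (blast intro: bounded_with_inverse_mono)

lemma invertible_if_GL_subgroup: "is_GL_subgroup S \<Longrightarrow> R \<in> S \<Longrightarrow> invertible R"
  unfolding is_GL_subgroup_def GL_def by blast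

lemma matrix_vector_mult_nonzero:
  fixes R :: "'a::field^'n^'n"
  assumes "invertible R" "u \<noteq> 0"
  shows "R *v u \<noteq> 0"
  using matrix_inv_cancel_left[OF assms(1), of u] assms(2) by auto

lemma closed_insert_zero_bounded_orbit:
  fixes u :: "real^'n"
  assumes "closedin (top_of_set GL) S" "u \<noteq> 0"
  shows "closed (insert 0 (bounded_orbit S K u))"
proof -
  have "continuous_on UNIV (\<lambda>R::real^'n^'n. R *v u)"
    unfolding matrix_vector_mult_def by (intro continuous_intros)
  then have "compact ((\<lambda>R. R *v u) ` {R\<in>S. bounded_with_inverse K R})"
    using compact_bounded_with_inverse_in[OF assms(1)] continuous_on_subset
    by (blast intro: compact_continuous_image)
  moreover have "S \<subseteq> GL"
    using assms(1) by (rule closedin_imp_subset)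
  then have "0 \<notin> (\<lambda>R. R *v u) ` {R\<in>S. bounded_with_inverse K R}"
    using matrix_vector_mult_nonzero assms(2) by (force simp: GL_def)
  ultimately show ?thesis
    unfolding bounded_orbit_def by (rule closed_insert_zero_proj_saturation)
qed

lemma bounded_orbit_trans:
  assumes S: "is_GL_subgroup S"
    and "y \<in> bounded_orbit S K u" "x \<in> bounded_orbit S L y"
  shows "x \<in> bounded_orbit S (L * K) u"
proof -
  obtain R where R: "R \<in> S" "bounded_with_inverse K R" "proj_eq (R *v u) y"
    using assms(2) by (auto simp: mem_bounded_orbit)
  obtain Q where Q: "Q \<in> S" "bounded_with_inverse L Q" "proj_eq (Q *v y) x"
    using assms(3) by (auto simp: mem_bounded_orbit)
  have "Q ** R \<in> S"
    using S Q(1) R(1) by (simp add: is_GL_subgroup_def)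
  moreover have "bounded_with_inverse (L * K) (Q ** R)"
    using bounded_with_inverse_mult invertible_if_GL_subgroup[OF S] Q R by blast
  moreover have "proj_eq ((Q ** R) *v u) x"
    using proj_eq_trans[OF proj_eq_matrix_vector_mult[OF R(3)] Q(3)]
    by (simp add: matrix_vector_mul_assoc)
  ultimately show ?thesis
    by (auto simp: mem_bounded_orbit)
qed

lemma bounded_orbit_sym:
  assumes S: "is_GL_subgroup S" and "y \<in> bounded_orbit S K u"
  shows "u \<in> bounded_orbit S K y"
proof -
  obtain R where R: "R \<in> S" "bounded_with_inverse K R" "proj_eq (R *v u) y"
    using assms(2) by (auto simp: mem_bounded_orbit)
  have "invertible R"
    using S R(1) by (rule invertible_if_GL_subgroup)
  have "matrix_inv R \<in> S"
    using S R(1) by (simp add: is_GL_subgroup_def)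
  moreover have "bounded_with_inverse K (matrix_inv R)"
    using \<open>invertible R\<close> R(2) by (rule bounded_with_inverse_matrix_inv)
  moreover have "proj_eq (matrix_inv R *v y) u"
    using proj_eq_matrix_vector_mult[OF proj_eq_sym[OF R(3)], of "matrix_inv R"]
    by (simp add: matrix_inv_cancel_left[OF \<open>invertible R\<close>])
  ultimately show ?thesis
    by (auto simp: mem_bounded_orbit)
qed

lemma interior_bounded_orbit_nonempty:
  fixes u :: "real^'n"
  assumes "accessible S" "u \<noteq> 0"
  shows "\<exists>K. interior (bounded_orbit S K u) \<noteq> {}"
proof -
  have "(\<Union>k. insert 0 (bounded_orbit S (real k) u)) = UNIV"
  proof (intro set_eqI iffI UNIV_I)
    fix x :: "real^'n"
    show "x \<in> (\<Union>k. insert 0 (bounded_orbit S (real k) u))"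
    proof (cases "x = 0")
      case False
      then obtain R where "R \<in> S" "proj_eq (R *v u) x"
        using assms unfolding accessible_def by blast
      moreover obtain K where "bounded_with_inverse K R"
        using bounded_with_inverse_exists by blast
      moreover obtain k :: nat where "K \<le> real k"
        using real_arch_simple by blast
      ultimately have "x \<in> bounded_orbit S (real k) u"
        by (auto simp: mem_bounded_orbit intro: bounded_with_inverse_mono)
      then show ?thesis
        by blast
    qed simp
  qed
  moreover have "closed (insert 0 (bounded_orbit S (real k) u))" for k
    using assms closed_insert_zero_bounded_orbit unfolding accessible_def by blast
  ultimately obtain k where "interior (insert 0 (bounded_orbit S (real k) u)) \<noteq> {}"
    using closed_cover_interior_nonempty[of "\<lambda>k. insert 0 (bounded_orbit S (real k) u)"] by blast
  then show ?thesis
    using interior_insert_nonempty by blast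
qed

lemma zero_notin_bounded_orbit:
  assumes "is_GL_subgroup S" "u \<noteq> 0"
  shows "0 \<notin> bounded_orbit S K u"
  unfolding mem_bounded_orbit proj_eq_def
  using matrix_vector_mult_nonzero invertible_if_GL_subgroup[OF assms(1)] assms(2) by auto

lemma interior_bounded_orbit_translate:
  assumes S: "is_GL_subgroup S" and "R \<in> S" "bounded_with_inverse L R"
    and "w \<in> interior (bounded_orbit S K u)" "proj_eq (R *v w) x"
  shows "x \<in> interior (bounded_orbit S (L * K) u)"
proof -
  have "invertible R"
    using S \<open>R \<in> S\<close> by (rule invertible_if_GL_subgroup)
  define U where "U = (\<lambda>y. matrix_inv R *v y) -` proj_saturation (interior (bounded_orbit S K u))"
  have "open U"
    unfolding U_def
    by (intro open_vimage open_proj_saturation open_interior)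
       (simp add: linear_continuous_on matrix_vector_mul_bounded_linear)
  moreover have "x \<in> U"
    using assms(4) proj_eq_matrix_vector_mult[OF assms(5), of "matrix_inv R"]
    unfolding U_def proj_saturation_def
    by (auto simp: matrix_inv_cancel_left[OF \<open>invertible R\<close>])
  moreover have "U \<subseteq> bounded_orbit S (L * K) u"
  proof
    fix y
    assume "y \<in> U"
    then obtain v where v: "v \<in> interior (bounded_orbit S K u)" "proj_eq v (matrix_inv R *v y)"
      unfolding U_def proj_saturation_def by blast
    then have "proj_eq (R *v v) y"
      using proj_eq_matrix_vector_mult[of v "matrix_inv R *v y" R]
      by (simp add: matrix_inv_cancel_right[OF \<open>invertible R\<close>])
    then have "y \<in> bounded_orbit S L v"
      using assms(2,3) by (auto simp: mem_bounded_orbit)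
    moreover have "v \<in> bounded_orbit S K u"
      using v(1) interior_subset by blast
    ultimately show "y \<in> bounded_orbit S (L * K) u"
      using S bounded_orbit_trans by blast
  qed
  ultimately show ?thesis
    using interior_maximal by blast
qed

lemma interior_bounded_orbit_spreads:
  assumes acc: "accessible S" and "u \<noteq> 0" "x \<noteq> 0"
    and "interior (bounded_orbit S K u) \<noteq> {}"
  shows "\<exists>L. x \<in> interior (bounded_orbit S L u)"
proof -
  have S: "is_GL_subgroup S"
    using acc unfolding accessible_def by blast
  obtain w where w: "w \<in> interior (bounded_orbit S K u)"
    using assms(4) by blast
  then have "w \<noteq> 0"
    using zero_notin_bounded_orbit[OF S \<open>u \<noteq> 0\<close>] interior_subset by blast
  then obtain R where "R \<in> S" "proj_eq (R *v w) x"
    using acc \<open>x \<noteq> 0\<close> unfolding accessible_def by blast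
  moreover obtain L where "bounded_with_inverse L R"
    using bounded_with_inverse_exists by blast
  ultimately show ?thesis
    using interior_bounded_orbit_translate[OF S _ _ w] by blast
qed

lemma bounded_orbit_uniform:
  assumes "accessible S" "u \<noteq> 0"
  shows "\<exists>K. \<forall>x. x \<noteq> 0 \<longrightarrow> x \<in> bounded_orbit S K u"
proof -
  obtain K0 where K0: "interior (bounded_orbit S K0 u) \<noteq> {}"
    using interior_bounded_orbit_nonempty[OF assms] by blast
  have "\<exists>L. x \<in> interior (bounded_orbit S L u)" if "x \<in> sphere 0 1" for x
  proof -
    have "x \<noteq> 0"
      using that by auto
    then show ?thesis
      using interior_bounded_orbit_spreads[OF assms _ K0] by blast
  qed
  moreover have "mono (\<lambda>K. bounded_orbit S K u)"
    by (rule monoI) (rule bounded_orbit_mono)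
  ultimately obtain K where K: "sphere 0 1 \<subseteq> bounded_orbit S K u"
    using compact_subset_of_mono_family[OF compact_sphere, of "\<lambda>K. bounded_orbit S K u"] by blast
  have "x \<in> bounded_orbit S K u" if "x \<noteq> 0" for x
  proof (rule bounded_orbit_proj_eq)
    have "inverse (norm x) *\<^sub>R x \<in> sphere 0 1"
      using that by simp
    then show "inverse (norm x) *\<^sub>R x \<in> bounded_orbit S K u"
      using K by blast
    show "proj_eq (inverse (norm x) *\<^sub>R x) x"
      using that by (simp add: proj_eq_scaleR)
  qed
  then show ?thesis
    by blast
qed

theorem lemma2p5:
  fixes S :: "(real^'n^'n) set"
  assumes "accessible S"
  shows "\<exists>K>0. \<forall>u v. u \<noteq> 0 \<longrightarrow> v \<noteq> 0 \<longrightarrow>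
           (\<exists>R\<in>S. onorm (\<lambda>x. R *v x) \<le> K \<and> onorm (\<lambda>x. matrix_inv R *v x) \<le> K
                   \<and> proj_eq (R *v u) v)"
proof -
  have S: "is_GL_subgroup S"
    using assms unfolding accessible_def by blast
  obtain u0 :: "real^'n" where "u0 \<noteq> 0"
    using zero_neq_one by blast
  obtain C where C: "\<And>x. x \<noteq> 0 \<Longrightarrow> x \<in> bounded_orbit S C u0"
    using bounded_orbit_uniform[OF assms \<open>u0 \<noteq> 0\<close>] by blast
  have "v \<in> bounded_orbit S (max 1 (C * C)) u" if "u \<noteq> 0" "v \<noteq> 0" for u v
  proof -
    have "u0 \<in> bounded_orbit S C u"
      using bounded_orbit_sym[OF S C[OF \<open>u \<noteq> 0\<close>]] .
    then have "v \<in> bounded_orbit S (C * C) u"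
      using bounded_orbit_trans[OF S _ C[OF \<open>v \<noteq> 0\<close>]] by blast
    then show ?thesis
      using bounded_orbit_mono[of "C * C" "max 1 (C * C)"] by auto
  qed
  then show ?thesis
    unfolding mem_bounded_orbit bounded_with_inverse_def
    by (metis max.strict_coboundedI1 zero_less_one)
qed

end
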